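(* Let $(K,\delta)$ be a differential field of characteristic zero. Then $\mathrm{Stab}(\delta,K)=\mathrm{Attrac}(\delta,K)$.
   Context: A differential field $(K,\delta)$ is a field $K$ with an additive map $\delta:K\to K$ such that $\delta(fg)=f\delta(g)+g\delta(f)$. $\mathrm{Stab}(\delta,K)$ is the set of $a\in K$ for which there is a sequence $(a_i)_{i\ge0}$ in $K$ with $a_0=a$ and $\delta(a_{i+1})=a_i$ for all $i\in\mathbb{N}$ (stable elements). $\mathrm{Attrac}(\delta,K)=\bigcap_{i\in\mathbb{N}}\delta^i(K)$ is the set of $a\in K$ such that for every $i\in\mathbb{N}$ there is $a_i\in K$ with $a=\delta^i(a_i)$ (attractive elements). *)

theory Defs
  imports Main
begin

definition is_derivation :: "('a::field \<Rightarrow> 'a) \<Rightarrow> bool" where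
  "is_derivation \<delta> \<longleftrightarrow>
     (\<forall>f g. \<delta> (f + g) = \<delta> f + \<delta> g) \<and>
     (\<forall>f g. \<delta> (f * g) = f * \<delta> g + g * \<delta> f)"

definition Stab :: "('a \<Rightarrow> 'a) \<Rightarrow> 'a set" where
  "Stab \<delta> = {a. \<exists>s :: nat \<Rightarrow> 'a. s 0 = a \<and> (\<forall>i. \<delta> (s (Suc i)) = s i)}"

definition Attrac :: "('a \<Rightarrow> 'a) \<Rightarrow> 'a set" where
  "Attrac \<delta> = (\<Inter>i. range (\<delta> ^^ i))"

end

theory Submission
  imports Defs
begin

text \<open>
  Stable elements are trivially attractive. Conversely, by dependent choice it suffices that
  every attractive \<open>a\<close> has an attractive antiderivative. Let \<open>\<delta> b = a\<close>. Since \<open>a\<close> is an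
  \<open>(m+1)\<close>-fold derivative, \<open>b + c\<close> is an \<open>m\<close>-fold derivative for some constant \<open>c\<close>, for every \<open>m\<close>.
  The image of \<open>\<delta> ^^ m\<close> is a vector space over the field of constants, so it contains either all
  constants or no nonzero one. If the first holds for every \<open>m\<close>, then \<open>b\<close> itself is attractive.
  Otherwise the image of some \<open>\<delta> ^^ m\<^sub>0\<close> contains no nonzero constant; then \<open>c\<close> is the same for
  all \<open>m \<ge> m\<^sub>0\<close>, and \<open>b + c\<close> is attractive.
\<close>

lemma Stab_subset_Attrac: "Stab f \<subseteq> Attrac f"
proof
  fix a assume "a \<in> Stab f"
  then obtain s where s0: "s 0 = a" and sS: "\<And>i. f (s (Suc i)) = s i"
    unfolding Stab_def by blast
  have "(f ^^ i) (s i) = a" for i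
    by (induction i) (simp_all add: s0 sS funpow_Suc_right del: funpow.simps)
  then show "a \<in> Attrac f"
    unfolding Attrac_def by (metis INT_I rangeI)
qed

lemma subset_StabI:
  assumes "\<And>x. x \<in> A \<Longrightarrow> \<exists>y\<in>A. f y = x"
  shows "A \<subseteq> Stab f"
proof
  fix a assume "a \<in> A"
  have "\<exists>s. \<forall>n. (s n \<in> A \<and> (n = 0 \<longrightarrow> s n = a)) \<and> f (s (Suc n)) = s n"
    by (rule dependent_nat_choice) (use \<open>a \<in> A\<close> assms in auto)
  then show "a \<in> Stab f"
    unfolding Stab_def by blast
qed

lemma range_funpow_antimono:
  fixes f :: "'a \<Rightarrow> 'a"
  assumes "m \<le> n"
  shows "range (f ^^ n) \<subseteq> range (f ^^ m)"
proof -
  obtain k where n: "n = m + k"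
    using assms le_iff_add by blast
  have "(f ^^ n) x = (f ^^ m) ((f ^^ k) x)" for x
    by (simp add: n funpow_add)
  then show ?thesis
    by auto
qed

locale derivation =
  fixes \<delta> :: "'a::field \<Rightarrow> 'a"
  assumes is_derivation: "is_derivation \<delta>"
begin

lemma add: "\<delta> (f + g) = \<delta> f + \<delta> g"
  and mult: "\<delta> (f * g) = f * \<delta> g + g * \<delta> f"
  using is_derivation unfolding is_derivation_def by blast+

lemma zero [simp]: "\<delta> 0 = 0"
  using add[of 0 0] by (metis add_cancel_right_right add_0)

lemma one [simp]: "\<delta> 1 = 0"
  using mult[of 1 1] by (metis add_cancel_right_right mult_1)

lemma diff: "\<delta> (f - g) = \<delta> f - \<delta> g"
  using add[of "f - g" g] by simp

lemma inverse_constant: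
  assumes "\<delta> c = 0"
  shows "\<delta> (inverse c) = 0"
proof (cases "c = 0")
  case False
  have "0 = \<delta> (c * inverse c)"
    using False by simp
  also have "\<dots> = c * \<delta> (inverse c)"
    by (simp add: mult assms)
  finally show ?thesis
    using False by simp
qed simp

lemma funpow_diff: "(\<delta> ^^ m) (f - g) = (\<delta> ^^ m) f - (\<delta> ^^ m) g"
  by (induction m) (simp_all add: diff)

lemma funpow_mult_constant: "\<delta> c = 0 \<Longrightarrow> (\<delta> ^^ m) (c * f) = c * (\<delta> ^^ m) f"
  by (induction m) (simp_all add: mult)

lemma range_funpow_diff:
  "x \<in> range (\<delta> ^^ m) \<Longrightarrow> y \<in> range (\<delta> ^^ m) \<Longrightarrow> x - y \<in> range (\<delta> ^^ m)"
  by (auto simp: funpow_diff [symmetric])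

lemma range_funpow_mult_constant:
  "\<delta> c = 0 \<Longrightarrow> x \<in> range (\<delta> ^^ m) \<Longrightarrow> c * x \<in> range (\<delta> ^^ m)"
  by (auto simp: funpow_mult_constant [symmetric])

lemma constant_in_range_funpow:
  "\<delta> c = 0 \<Longrightarrow> 1 \<in> range (\<delta> ^^ m) \<Longrightarrow> c \<in> range (\<delta> ^^ m)"
  using range_funpow_mult_constant[of c 1] by simp

lemma constant_in_range_funpow_eq_0:
  assumes "\<delta> c = 0" "c \<in> range (\<delta> ^^ m)" "1 \<notin> range (\<delta> ^^ m)"
  shows "c = 0"
proof (rule ccontr)
  assume "c \<noteq> 0"
  then have "1 = inverse c * c"
    by simp
  also have "\<dots> \<in> range (\<delta> ^^ m)"
    by (rule range_funpow_mult_constant) (use assms inverse_constant in auto)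
  finally show False
    using assms(3) by contradiction
qed

lemma antiderivative_shift_in_range_funpow:
  assumes "a \<in> Attrac \<delta>" "\<delta> b = a"
  obtains c where "\<delta> c = 0" "b + c \<in> range (\<delta> ^^ m)"
proof -
  have "a \<in> range (\<delta> ^^ Suc m)"
    using assms(1) unfolding Attrac_def by blast
  then obtain y where "a = \<delta> ((\<delta> ^^ m) y)"
    by auto
  then show ?thesis
    using that[of "(\<delta> ^^ m) y - b"] by (simp add: diff assms(2))
qed

lemma constant_shift_unique:
  assumes "\<delta> c = 0" "\<delta> c' = 0" "b + c \<in> range (\<delta> ^^ m)" "b + c' \<in> range (\<delta> ^^ m)"
    and "1 \<notin> range (\<delta> ^^ m)"
  shows "c = c'"
proof -
  have "c - c' \<in> range (\<delta> ^^ m)"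
    using range_funpow_diff[OF assms(3,4)] by simp
  moreover have "\<delta> (c - c') = 0"
    by (simp add: diff assms(1,2))
  ultimately show ?thesis
    using constant_in_range_funpow_eq_0 assms(5) by fastforce
qed

lemma Attrac_antiderivative_in_Attrac:
  assumes a: "a \<in> Attrac \<delta>"
  shows "\<exists>b\<in>Attrac \<delta>. \<delta> b = a"
proof -
  have "a \<in> range (\<delta> ^^ 1)"
    using a unfolding Attrac_def by blast
  then obtain b where b: "\<delta> b = a"
    by auto
  note shift = antiderivative_shift_in_range_funpow[OF a b]
  consider "\<And>m. 1 \<in> range (\<delta> ^^ m)" | m\<^sub>0 where "1 \<notin> range (\<delta> ^^ m\<^sub>0)"
    by blast
  then show ?thesis
  proof cases
    case 1
    have "b \<in> range (\<delta> ^^ m)" for m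
    proof -
      obtain c where "\<delta> c = 0" and bc: "b + c \<in> range (\<delta> ^^ m)"
        using shift .
      then have "c \<in> range (\<delta> ^^ m)"
        using 1 constant_in_range_funpow by blast
      from range_funpow_diff[OF bc this] show ?thesis
        by simp
    qed
    with b show ?thesis
      unfolding Attrac_def by blast
  next
    case 2
    obtain c\<^sub>0 where c\<^sub>0: "\<delta> c\<^sub>0 = 0" "b + c\<^sub>0 \<in> range (\<delta> ^^ m\<^sub>0)"
      using shift .
    have "b + c\<^sub>0 \<in> range (\<delta> ^^ m)" for m
    proof -
      obtain c where c: "\<delta> c = 0" "b + c \<in> range (\<delta> ^^ (m + m\<^sub>0))"
        using shift .
      have "b + c \<in> range (\<delta> ^^ m\<^sub>0)" "b + c \<in> range (\<delta> ^^ m)"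
        using c(2) range_funpow_antimono le_add1 le_add2 by (meson subsetD)+
      moreover have "c = c\<^sub>0"
        using constant_shift_unique c(1) c\<^sub>0 2 calculation(1) by blast
      ultimately show ?thesis
        by simp
    qed
    then show ?thesis
      using b c\<^sub>0(1) add[of b c\<^sub>0] unfolding Attrac_def by auto
  qed
qed

end

theorem proposition2p4:
  fixes \<delta> :: "'a::field_char_0 \<Rightarrow> 'a"
  assumes "is_derivation \<delta>"
  shows "Stab \<delta> = Attrac \<delta>"
proof -
  interpret derivation \<delta>
    by unfold_locales (rule assms)
  show ?thesis
    by (intro equalityI Stab_subset_Attrac subset_StabI Attrac_antiderivative_in_Attrac)
qed

end
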